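(* The $5$-dimensional real unimodular Lie algebra $\mathfrak{sl}(2,\mathbb R)\ltimes\mathbb R^2$ possesses an inner product with a geodesic basis.
   Context: $\mathfrak{sl}(2,\mathbb R)\ltimes\mathbb R^2$ is the semidirect product in which $\mathfrak{sl}(2,\mathbb R)$ acts on the abelian ideal $\mathbb R^2$ by its canonical linear action; equivalently it has basis $\{X_1,\dots,X_5\}$ with nonzero brackets $[X_1,X_2]=2X_2$, $[X_1,X_3]=-2X_3$, $[X_1,X_4]=X_4$, $[X_1,X_5]=-X_5$, $[X_2,X_3]=X_1$, $[X_3,X_4]=X_5$, $[X_2,X_5]=X_4$. For an inner product $\langle\cdot,\cdot\rangle$ on a real Lie algebra $\mathfrak g$, a nonzero $X\in\mathfrak g$ is a geodesic element if $\langle X,[X,Y]\rangle=0$ for all $Y\in\mathfrak g$; a geodesic basis is a basis consisting of geodesic elements. *)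

theory Defs
  imports "HOL-Analysis.Analysis"
begin

text \<open>The Lie algebra sl(2,R) \<ltimes> R^2 is realised on real^5, with X_k the k-th
  standard basis vector (components indexed 1,2,3,4,5 of the index type 5).
  The bracket is the bilinear extension of the structure constants
  [X1,X2]=2X2, [X1,X3]=-2X3, [X1,X4]=X4, [X1,X5]=-X5, [X2,X3]=X1,
  [X3,X4]=X5, [X2,X5]=X4 (all others among basis vectors zero, up to antisymmetry).\<close>

definition sl2R2_bracket :: "real^5 \<Rightarrow> real^5 \<Rightarrow> real^5" where
  "sl2R2_bracket x y =
     (let p = (\<lambda>i j. x$i * y$j - x$j * y$i) in
      (\<chi> k. if k = 1 then p 2 3
            else if k = 2 then 2 * p 1 2
            else if k = 3 then - 2 * p 1 3
            else if k = 4 then p 1 4 + p 2 5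
            else - p 1 5 + p 3 4))"

definition is_inner_product :: "('a::real_vector \<Rightarrow> 'a \<Rightarrow> real) \<Rightarrow> bool" where
  "is_inner_product B \<longleftrightarrow>
     (\<forall>x. linear (B x)) \<and> (\<forall>y. linear (\<lambda>x. B x y)) \<and>
     (\<forall>x y. B x y = B y x) \<and> (\<forall>x. x \<noteq> 0 \<longrightarrow> B x x > 0)"

definition geodesic_element ::
  "('a::real_vector \<Rightarrow> 'a \<Rightarrow> 'a) \<Rightarrow> ('a \<Rightarrow> 'a \<Rightarrow> real) \<Rightarrow> 'a \<Rightarrow> bool" where
  "geodesic_element br B X \<longleftrightarrow> X \<noteq> 0 \<and> (\<forall>Y. B X (br X Y) = 0)"

end

theory Submission
  imports Defs
begin

text \<open>Take the inner product for which X1, ..., X5 are orthogonal with squared lengths 2, 2, 2, 1, 1.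
  Since the condition \<open>\<langle>X, [X, Y]\<rangle> = 0\<close> is linear in Y, checking that X is geodesic is a finite
  computation, and it succeeds for the five vectors X1, X2 + X3, X2 - X3, X2 + 2 X5, X3 + 2 X4, which
  form a basis. For instance, for X = X2 + 2 X5 the X2- and X5-components of [X, Y] are -2 y1 and
  2 y1, and the weights 2 and 1 make their contributions cancel.\<close>

lemma exhaust_5:
  fixes x :: 5
  shows "x = 1 \<or> x = 2 \<or> x = 3 \<or> x = 4 \<or> x = 5"
proof (induct x)
  case (of_int z)
  then have "z = 0 \<or> z = 1 \<or> z = 2 \<or> z = 3 \<or> z = 4" by fastforce
  then show ?case by auto
qed

lemma forall_5: "(\<forall>i::5. P i) \<longleftrightarrow> P 1 \<and> P 2 \<and> P 3 \<and> P 4 \<and> P 5"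
  by (metis exhaust_5)

lemma UNIV_5: "UNIV = {1, 2, 3, 4, 5::5}"
  using exhaust_5 by auto

lemma sum_5: "sum f (UNIV::5 set) = f 1 + f 2 + f 3 + f 4 + f 5"
  unfolding UNIV_5 by (simp add: ac_simps)

lemma vector_5 [simp]:
  "(vector [a, b, c, d, e] :: ('a::zero)^5) $ 1 = a"
  "(vector [a, b, c, d, e] :: ('a::zero)^5) $ 2 = b"
  "(vector [a, b, c, d, e] :: ('a::zero)^5) $ 3 = c"
  "(vector [a, b, c, d, e] :: ('a::zero)^5) $ 4 = d"
  "(vector [a, b, c, d, e] :: ('a::zero)^5) $ 5 = e"
  unfolding vector_def by simp_all

lemma vector_5_eq_iff:
  "(vector [a, b, c, d, e] :: ('a::zero)^5) = vector [a', b', c', d', e'] \<longleftrightarrow>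
     a = a' \<and> b = b' \<and> c = c' \<and> d = d' \<and> e = e'"
  by (auto simp: vec_eq_iff forall_5)

definition diagonal_form :: "real^'n \<Rightarrow> real^'n \<Rightarrow> real^'n \<Rightarrow> real" where
  "diagonal_form w x y = (\<Sum>i\<in>UNIV. w$i * x$i * y$i)"

lemma is_inner_product_diagonal_form:
  fixes w :: "real^'n"
  assumes "\<And>i. w$i > 0"
  shows "is_inner_product (diagonal_form w)"
  unfolding is_inner_product_def
proof (intro conjI allI impI)
  fix x :: "real^'n"
  show "linear (diagonal_form w x)" "linear (\<lambda>y. diagonal_form w y x)"
    by (auto intro!: linearI simp: diagonal_form_def algebra_simps sum.distrib sum_distrib_left)
next
  fix x y :: "real^'n"
  show "diagonal_form w x y = diagonal_form w y x"
    by (simp add: diagonal_form_def mult_ac)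
next
  fix x :: "real^'n"
  assume "x \<noteq> 0"
  then obtain i where "x$i \<noteq> 0"
    by (auto simp: vec_eq_iff)
  then show "diagonal_form w x x > 0"
    unfolding diagonal_form_def
    by (intro sum_pos2[where i=i])
      (auto simp: mult.assoc zero_less_mult_iff zero_le_mult_iff intro: assms less_imp_le)
qed

lemma independent_if_card_eq_spanning:
  fixes S :: "(real^'n) set"
  assumes "finite S" "card S = CARD('n)" "span S = UNIV"
  shows "independent S"
  using card_eq_dim[of S UNIV] assms by simp

definition geodesic_basis :: "(real^5) set" where
  "geodesic_basis = {vector [1, 0, 0, 0, 0], vector [0, 1, 1, 0, 0], vector [0, 1, -1, 0, 0],
                     vector [0, 1, 0, 0, 2], vector [0, 0, 1, 2, 0]}"

abbreviation geodesic_form :: "real^5 \<Rightarrow> real^5 \<Rightarrow> real" where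
  "geodesic_form \<equiv> diagonal_form (vector [2, 2, 2, 1, 1])"

lemma geodesic_form_eq:
  "geodesic_form x y = 2 * x$1 * y$1 + 2 * x$2 * y$2 + 2 * x$3 * y$3 + x$4 * y$4 + x$5 * y$5"
  by (simp add: diagonal_form_def sum_5)

lemma sl2R2_bracket_nth:
  "sl2R2_bracket x y $ 1 = x$2 * y$3 - x$3 * y$2"
  "sl2R2_bracket x y $ 2 = 2 * (x$1 * y$2 - x$2 * y$1)"
  "sl2R2_bracket x y $ 3 = - 2 * (x$1 * y$3 - x$3 * y$1)"
  "sl2R2_bracket x y $ 4 = (x$1 * y$4 - x$4 * y$1) + (x$2 * y$5 - x$5 * y$2)"
  "sl2R2_bracket x y $ 5 = - (x$1 * y$5 - x$5 * y$1) + (x$3 * y$4 - x$4 * y$3)"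
  by (simp_all add: sl2R2_bracket_def)

lemma is_inner_product_geodesic_form: "is_inner_product geodesic_form"
proof (rule is_inner_product_diagonal_form)
  have "\<forall>i. (vector [2, 2, 2, 1, 1] :: real^5) $ i > 0"
    by (simp add: forall_5)
  then show "\<And>i. (vector [2, 2, 2, 1, 1] :: real^5) $ i > 0" by simp
qed

lemma geodesic_element_geodesic_basis:
  "X \<in> geodesic_basis \<Longrightarrow> geodesic_element sl2R2_bracket geodesic_form X"
  unfolding geodesic_basis_def geodesic_element_def
  by (auto simp: vec_eq_iff forall_5 geodesic_form_eq sl2R2_bracket_nth algebra_simps)

lemma span_geodesic_basis: "span geodesic_basis = UNIV"
proof -
  have "x \<in> span geodesic_basis" for x :: "real^5"
  proof -
    define a b c d e where "a = x$1" "b = x$2" "c = x$3" "d = x$4" "e = x$5"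
    have "x = a *\<^sub>R vector [1, 0, 0, 0, 0]
        + ((b + c)/2 - d/4 - e/4) *\<^sub>R vector [0, 1, 1, 0, 0]
        + ((b - c)/2 + d/4 - e/4) *\<^sub>R vector [0, 1, -1, 0, 0]
        + (e/2) *\<^sub>R vector [0, 1, 0, 0, 2] + (d/2) *\<^sub>R vector [0, 0, 1, 2, 0]"
      by (simp add: vec_eq_iff forall_5 a_b_c_d_e_def field_simps)
    also have "\<dots> \<in> span geodesic_basis"
      unfolding geodesic_basis_def by (intro span_add span_scale span_base) auto
    finally show ?thesis .
  qed
  then show ?thesis by auto
qed

lemma independent_geodesic_basis: "independent geodesic_basis"
proof (rule independent_if_card_eq_spanning)
  show "finite geodesic_basis" "card geodesic_basis = CARD(5)"
    by (simp_all add: geodesic_basis_def vector_5_eq_iff)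
qed (fact span_geodesic_basis)

theorem proposition8p1:
  shows "\<exists>B :: real^5 \<Rightarrow> real^5 \<Rightarrow> real. is_inner_product B \<and>
           (\<exists>S. independent S \<and> span S = UNIV \<and>
                (\<forall>X\<in>S. geodesic_element sl2R2_bracket B X))"
  using is_inner_product_geodesic_form independent_geodesic_basis span_geodesic_basis
    geodesic_element_geodesic_basis
  by blast

end
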